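(* Let $\mathcal{C}=\{\mathcal{N}_1,\dots,\mathcal{N}_k\}$ be a clustering of a finite set of elements into $k$ clusters in which every element belongs to at least one and at most two clusters. If for every triple of distinct clusters $p,q,r\in[k]$ we have $\mathcal{N}_p\setminus(\mathcal{N}_q\cup\mathcal{N}_r)\neq\emptyset$, then every cluster $\mathcal{N}_i$ is maximal.
   Context: Two elements test positive if they belong to a common cluster. A cluster $\mathcal{N}_i$ is maximal if there is no element $x\notin\mathcal{N}_i$ that tests positive with every element of $\mathcal{N}_i$. *)

theory Defs
  imports Main
begin

definition is_clustering :: "'a set \<Rightarrow> nat \<Rightarrow> (nat \<Rightarrow> 'a set) \<Rightarrow> bool" where
  "is_clustering V k N \<longleftrightarrow> finite V \<and> (\<forall>i\<in>{1..k}. N i \<subseteq> V)"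

definition tests_positive :: "nat \<Rightarrow> (nat \<Rightarrow> 'a set) \<Rightarrow> 'a \<Rightarrow> 'a \<Rightarrow> bool" where
  "tests_positive k N x y \<longleftrightarrow> (\<exists>j\<in>{1..k}. x \<in> N j \<and> y \<in> N j)"

definition maximal_cluster :: "'a set \<Rightarrow> nat \<Rightarrow> (nat \<Rightarrow> 'a set) \<Rightarrow> nat \<Rightarrow> bool" where
  "maximal_cluster V k N i \<longleftrightarrow>
     \<not> (\<exists>x\<in>V. x \<notin> N i \<and> (\<forall>y\<in>N i. tests_positive k N x y))"

end

theory Submission
  imports Defs
begin

text \<open>Suppose some x outside N i tests positive with all of N i. The clusters containing x
  are at most two, none of them N i, so they lie among two clusters N q, N r with q, r
  distinct from i. The triple condition yields y in N i outside N q and N r; then x and y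
  share no cluster, a contradiction.\<close>

lemma subset_of_card_le_2_within_pair:
  assumes "S \<subseteq> I" "card S \<le> 2" "2 \<le> card I"
  shows "\<exists>q\<in>I. \<exists>r\<in>I. q \<noteq> r \<and> S \<subseteq> {q, r}"
proof -
  have "finite I" using \<open>2 \<le> card I\<close> by (metis card.infinite not_numeral_le_zero)
  then obtain B where "S \<subseteq> B" "B \<subseteq> I" "card B = 2"
    using exists_subset_between[OF \<open>card S \<le> 2\<close> \<open>2 \<le> card I\<close> \<open>S \<subseteq> I\<close>] by blast
  then obtain q r where "B = {q, r}" "q \<noteq> r" by (auto simp: card_2_iff)
  with \<open>S \<subseteq> B\<close> \<open>B \<subseteq> I\<close> show ?thesis by blast
qed

lemma not_tests_positive_if_clusters_avoid:
  assumes "{j\<in>{1..k}. x \<in> N j} \<subseteq> {q, r}" "y \<notin> N q" "y \<notin> N r"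
  shows "\<not> tests_positive k N x y"
  using assms unfolding tests_positive_def by blast

theorem lemma6:
  fixes V :: "'a set" and k :: nat and N :: "nat \<Rightarrow> 'a set"
  assumes clust: "is_clustering V k N"
    and k3: "k \<ge> 3"
    and cover: "\<forall>x\<in>V. 1 \<le> card {i\<in>{1..k}. x \<in> N i} \<and> card {i\<in>{1..k}. x \<in> N i} \<le> 2"
    and triple: "\<forall>p\<in>{1..k}. \<forall>q\<in>{1..k}. \<forall>r\<in>{1..k}.
                   p \<noteq> q \<and> p \<noteq> r \<and> q \<noteq> r \<longrightarrow> N p - (N q \<union> N r) \<noteq> {}"
  shows "\<forall>i\<in>{1..k}. maximal_cluster V k N i"
  unfolding maximal_cluster_def
proof (intro ballI notI)
  fix i assume i: "i \<in> {1..k}"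
  assume "\<exists>x\<in>V. x \<notin> N i \<and> (\<forall>y\<in>N i. tests_positive k N x y)"
  then obtain x where "x \<in> V" "x \<notin> N i" and positive: "\<forall>y\<in>N i. tests_positive k N x y"
    by blast
  let ?S = "{j\<in>{1..k}. x \<in> N j}"
  have "?S \<subseteq> {1..k} - {i}" using \<open>x \<notin> N i\<close> by auto
  moreover have "card ?S \<le> 2" using bspec[OF cover \<open>x \<in> V\<close>] by (rule conjunct2)
  moreover have "2 \<le> card ({1..k} - {i})" using i k3 by (simp add: card_Diff_singleton)
  ultimately obtain q r where qr: "q \<in> {1..k} - {i}" "r \<in> {1..k} - {i}" "q \<noteq> r" "?S \<subseteq> {q, r}"
    by (blast dest: subset_of_card_le_2_within_pair)
  have "N i - (N q \<union> N r) \<noteq> {}"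
    using triple[rule_format, of i q r] i qr(1-3) by blast
  then obtain y where "y \<in> N i" "y \<notin> N q" "y \<notin> N r"
    by blast
  then have "\<not> tests_positive k N x y"
    using not_tests_positive_if_clusters_avoid[OF qr(4)] by blast
  with positive \<open>y \<in> N i\<close> show False
    by blast
qed

end
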